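(* Consider the setting described in the context and suppose Assumptions A1 and A2 hold. For nodes $k,l$ and iteration $i$ of the non-cooperative Gauss–Newton update, let $E_{kl}^i=Q_k(x_k^i)-Q_l(x_l^i)$. Then $$\|E_{kl}^i\|\le n_{kl}\gamma_F\|x_k^i-x_l^i\|+(n_{k|l}+n_{l|k})\sigma_{max}^2,$$ and $\|[Q_l(x_l^0)]^{-1}E_{kl}^0\|<1$ holds when $$\frac{n_{k|l}+n_{l|k}}{n_l}<\frac{\sigma_{min}^2}{\sigma_{max}^2}<1.$$
   Context: Network: a node set $\mathcal{N}=\{1,\ldots,N\}$; each node $k$ has a neighborhood $\mathcal{N}_k\subseteq\mathcal{N}$ containing $k$, with $n_k=|\mathcal{N}_k|$. $n_{kl}$ is the number of nodes in both $\mathcal{N}_k$ and $\mathcal{N}_l$; $n_{k|l}$ is the number of nodes in $\mathcal{N}_k$ but not in $\mathcal{N}_l$. The unknown parameter lies in a closed convex set $\mathbb{X}\subset\mathbb{R}^M$. Each node has a continuously differentiable $f_k:\mathbb{R}^M\to\mathbb{R}$ with row gradient $F_k(x)$ ($1\times M$); $f=(f_1,\ldots,f_N)^T$, $F$ its $N\times M$ Jacobian; $F_{l\in\mathcal{N}_k}(x)$ is the matrix with rows $F_l(x)$, $l\in\mathcal{N}_k$, and $f_{l\in\mathcal{N}_k}(x)$ the vector of $f_l(x)$, $l\in\mathcal{N}_k$. For $y\in\mathbb{R}^M$, $Q_k(y)=\sum_{l\in\mathcal{N}_k}F_l^T(y)F_l(y)$, $q_k(y)=\sum_{l\in\mathcal{N}_k}F_l^T(y)f_l(y)$.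 The non-cooperative Gauss–Newton update, from a common initial estimate $x_k^0=x^0$ for all $k$, is $x_k^{i+1}=x_k^i-\alpha[Q_k(x_k^i)]^{-1}q_k(x_k^i)$, $\alpha\in(0,1]$. $x^*$ is a local minimizer of $\|f(x)\|^2$. Assumption A1: (1) stationary points $x^s$ with $2F^T(x^s)f(x^s)=0$ exist; (2) $\Sigma_{min}=\min_{x\in\mathbb{X}}\sqrt{\lambda_{min}(F^TF)}$, $\Sigma_{max}=\max_{x\in\mathbb{X}}\sqrt{\lambda_{max}(F^TF)}$ satisfy $0<\Sigma_{min}<\Sigma_{max}<\infty$. Assumption A2: (1) $\|f_{l\in\mathcal{N}_k}(x_k^i)\|\le e_{max}$ for estimates near $x^*$, and $\|f_{l\in\mathcal{N}_k}(x^* )\|=e_{min}$ is its minimum; (2) $\sigma_{min}=\min\sqrt{\lambda_{min}(F_k^T(x)F_k(x))}$, $\sigma_{max}=\max\sqrt{\lambda_{max}(F_k^T(x)F_k(x))}$ over $x\in\mathbb{X}$ and all $k$ satisfy $0<\sigma_{min}<\sigma_{max}<\infty$; (3) $F_{l\in\mathcal{N}_k}$, $F_k$ are $\omega$-Lipschitz on $\mathbb{X}$, and $\|F_k^T(x)f_k(x)-F_k^T(y)f_k(y)\|\le\gamma_f\|x-y\|$, $\|F_k^T(x)F_k(x)-F_k^T(y)F_k(y)\|\le\gamma_F\|x-y\|$ on $\mathbb{X}$, with $\gamma_f\ge\omega(e_{max}+\Sigma_{max})$, $\gamma_F\ge2\Sigma_{max}\omega$. *)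

theory Defs
  imports "HOL-Analysis.Analysis"
begin

text \<open>Matrices are M x M real matrices, represented as real^'m^'m; vectors in R^M
  as real^'m. A row gradient F_k(x) (1 x M) is represented by the vector real^'m,
  so that F_k^T F_k is the outer product.\<close>

definition outer :: "real^'m \<Rightarrow> real^'m \<Rightarrow> real^'m^'m" where
  "outer u v = (\<chi> i j. u$i * v$j)"

definition mnorm :: "real^'m^'m \<Rightarrow> real" where
  "mnorm A = onorm (\<lambda>v. A *v v)"

definition eigval :: "real^'m^'m \<Rightarrow> real \<Rightarrow> bool" where
  "eigval A \<mu> \<longleftrightarrow> (\<exists>v. v \<noteq> 0 \<and> A *v v = \<mu> *\<^sub>R v)"

definition lambda_min :: "real^'m^'m \<Rightarrow> real" where
  "lambda_min A = Inf {\<mu>. eigval A \<mu>}"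

definition lambda_max :: "real^'m^'m \<Rightarrow> real" where
  "lambda_max A = Sup {\<mu>. eigval A \<mu>}"

text \<open>Spectral norm of the (card S) x M matrix with rows G l, l in S.\<close>
definition stack_norm :: "nat set \<Rightarrow> (nat \<Rightarrow> real^'m) \<Rightarrow> real" where
  "stack_norm S G = Sup {sqrt (\<Sum>l\<in>S. (G l \<bullet> v)\<^sup>2) | v. norm v \<le> 1}"

definition Qmat :: "(nat \<Rightarrow> nat set) \<Rightarrow> (nat \<Rightarrow> real^'m \<Rightarrow> real^'m) \<Rightarrow> nat \<Rightarrow> real^'m \<Rightarrow> real^'m^'m" where
  "Qmat Nb F k y = (\<Sum>l\<in>Nb k. outer (F l y) (F l y))"

definition qvec :: "(nat \<Rightarrow> nat set) \<Rightarrow> (nat \<Rightarrow> real^'m \<Rightarrow> real) \<Rightarrow> (nat \<Rightarrow> real^'m \<Rightarrow> real^'m) \<Rightarrow> nat \<Rightarrow> real^'m \<Rightarrow> real^'m" where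
  "qvec Nb f F k y = (\<Sum>l\<in>Nb k. f l y *\<^sub>R F l y)"

end

theory Submission
  imports Defs
begin

text \<open>Split the neighbourhoods of k and l into their common part and the two differences. On
  the common part, Q_k - Q_l is a sum of differences of F_m^T F_m at x_k and x_l, each controlled
  by gamma_F; every other term is a rank-one matrix of norm |F_m|^2 <= sigma_max^2. For the second
  claim, the quadratic form of each F_m^T F_m is at least sigma_min^2 |h|^2, so Q_l is coercive
  with constant n_l sigma_min^2 and ||Q_l^-1|| <= 1 / (n_l sigma_min^2). At i = 0 all nodes share
  the estimate x^0, so only the rank-one terms survive in E_kl^0, and the hypothesis on the ratio
  makes the product a contraction.\<close>

lemma outer_mult_vec: "outer u v *v h = (v \<bullet> h) *\<^sub>R u"
  by (simp add: vec_eq_iff matrix_vector_mult_def outer_def inner_vec_def sum_distrib_left algebra_simps)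

lemma sum_matrix_vector_mult: "(\<Sum>i\<in>S. A i) *v h = (\<Sum>i\<in>S. A i *v h)"
  by (induction S rule: infinite_finite_induct) (auto simp: matrix_vector_mult_add_rdistrib)

lemma ex_nonzero_vec: "\<exists>u::real^'m. u \<noteq> 0"
  using axis_eq_0_iff by blast

lemma mnorm_le: "(\<And>h. norm (A *v h) \<le> b * norm h) \<Longrightarrow> mnorm A \<le> b"
  unfolding mnorm_def by (rule onorm_le)

lemma norm_mult_vec_le_mnorm: "norm (A *v h) \<le> mnorm A * norm h"
  unfolding mnorm_def by (rule onorm) simp

lemma mnorm_nonneg: "0 \<le> mnorm A"
  unfolding mnorm_def by (rule onorm_pos_le) simp

lemma mnorm_add_le: "mnorm (A + B) \<le> mnorm A + mnorm B"
proof (rule mnorm_le)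
  fix h
  have "norm ((A + B) *v h) \<le> norm (A *v h) + norm (B *v h)"
    unfolding matrix_vector_mult_add_rdistrib by (rule norm_triangle_ineq)
  also have "\<dots> \<le> mnorm A * norm h + mnorm B * norm h"
    by (intro add_mono norm_mult_vec_le_mnorm)
  finally show "norm ((A + B) *v h) \<le> (mnorm A + mnorm B) * norm h"
    by (simp add: distrib_right)
qed

lemma mnorm_diff_le: "mnorm (A - B) \<le> mnorm A + mnorm B"
proof (rule mnorm_le)
  fix h
  have "norm ((A - B) *v h) \<le> norm (A *v h) + norm (B *v h)"
    unfolding matrix_vector_mult_diff_rdistrib by (rule norm_triangle_ineq4)
  also have "\<dots> \<le> mnorm A * norm h + mnorm B * norm h"
    by (intro add_mono norm_mult_vec_le_mnorm)
  finally show "norm ((A - B) *v h) \<le> (mnorm A + mnorm B) * norm h"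
    by (simp add: distrib_right)
qed

lemma mnorm_sum_le: "mnorm (\<Sum>i\<in>S. A i) \<le> (\<Sum>i\<in>S. mnorm (A i))"
proof (rule mnorm_le)
  fix h
  have "norm ((\<Sum>i\<in>S. A i) *v h) \<le> (\<Sum>i\<in>S. norm (A i *v h))"
    unfolding sum_matrix_vector_mult by (rule norm_sum)
  also have "\<dots> \<le> (\<Sum>i\<in>S. mnorm (A i) * norm h)"
    by (intro sum_mono norm_mult_vec_le_mnorm)
  finally show "norm ((\<Sum>i\<in>S. A i) *v h) \<le> (\<Sum>i\<in>S. mnorm (A i)) * norm h"
    by (simp add: sum_distrib_right)
qed

lemma mnorm_mult_le: "mnorm (A ** B) \<le> mnorm A * mnorm B"
proof -
  have "(\<lambda>h. (A ** B) *v h) = (\<lambda>h. A *v h) \<circ> (\<lambda>h. B *v h)"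
    by (simp add: fun_eq_iff matrix_vector_mul_assoc)
  then show ?thesis
    unfolding mnorm_def by (simp add: onorm_compose)
qed

lemma mnorm_outer_le: "mnorm (outer v v) \<le> (norm v)\<^sup>2"
proof (rule mnorm_le)
  fix h
  have "norm (outer v v *v h) = \<bar>v \<bullet> h\<bar> * norm v" by (simp add: outer_mult_vec)
  also have "\<dots> \<le> norm v * norm h * norm v"
    by (intro mult_right_mono Cauchy_Schwarz_ineq2) auto
  finally show "norm (outer v v *v h) \<le> (norm v)\<^sup>2 * norm h"
    by (simp add: power2_eq_square mult_ac)
qed

lemma eigval_outer_bounds:
  assumes "eigval (outer v v) \<mu>"
  shows "0 \<le> \<mu> \<and> \<mu> \<le> (norm v)\<^sup>2"
proof -
  obtain u where u: "u \<noteq> 0" "(v \<bullet> u) *\<^sub>R v = \<mu> *\<^sub>R u"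
    using assms by (auto simp: eigval_def outer_mult_vec)
  have "u \<bullet> ((v \<bullet> u) *\<^sub>R v) = u \<bullet> (\<mu> *\<^sub>R u)" using u by simp
  hence rayleigh: "(v \<bullet> u)\<^sup>2 = \<mu> * (norm u)\<^sup>2"
    by (simp add: power2_eq_square inner_commute flip: power2_norm_eq_inner)
  have "\<bar>v \<bullet> u\<bar>\<^sup>2 \<le> (norm v * norm u)\<^sup>2"
    by (intro power_mono Cauchy_Schwarz_ineq2) auto
  with rayleigh have "\<mu> * (norm u)\<^sup>2 \<le> (norm v)\<^sup>2 * (norm u)\<^sup>2"
    by (simp add: power_mult_distrib)
  moreover have "0 \<le> \<mu> * (norm u)\<^sup>2" unfolding rayleigh[symmetric] by simp
  moreover have "(norm u)\<^sup>2 > 0" using u by simp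
  ultimately show ?thesis by (simp add: zero_le_mult_iff)
qed

lemma eigval_outer_zero: "u \<noteq> 0 \<Longrightarrow> v \<bullet> u = 0 \<Longrightarrow> eigval (outer v v) 0"
  unfolding eigval_def by (rule exI[of _ u]) (simp add: outer_mult_vec)

lemma eigval_outer_norm:
  fixes v :: "real^'m"
  shows "eigval (outer v v) ((norm v)\<^sup>2)"
proof (cases "v = 0")
  case True
  obtain u :: "real^'m" where "u \<noteq> 0" using ex_nonzero_vec by blast
  with True show ?thesis using eigval_outer_zero[of u v] by simp
next
  case False
  then show ?thesis
    unfolding eigval_def by (intro exI[of _ v]) (simp add: outer_mult_vec power2_norm_eq_inner)
qed

lemma lambda_min_outer_nonneg: "0 \<le> lambda_min (outer v v)"
  unfolding lambda_min_def using eigval_outer_norm[of v] eigval_outer_bounds[of v]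
  by (intro cInf_greatest) auto

lemma lambda_min_outer_le: "eigval (outer v v) \<mu> \<Longrightarrow> lambda_min (outer v v) \<le> \<mu>"
  unfolding lambda_min_def using eigval_outer_bounds[of v]
  by (intro cInf_lower) (auto simp: bdd_below_def)

lemma norm_square_le_lambda_max_outer: "(norm v)\<^sup>2 \<le> lambda_max (outer v v)"
  unfolding lambda_max_def using eigval_outer_norm[of v] eigval_outer_bounds[of v]
  by (intro cSup_upper) (auto simp: bdd_above_def)

text \<open>In dimension M > 1 the rank-one matrix has the eigenvalue 0 and the bound is trivial; in
  dimension 1 it is an equality. In particular sigma_min > 0 can only hold for M = 1.\<close>

lemma lambda_min_outer_mult_le: "lambda_min (outer v v) * (norm h)\<^sup>2 \<le> (v \<bullet> h)\<^sup>2"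
proof (cases "\<exists>u. u \<noteq> 0 \<and> v \<bullet> u = 0")
  case True
  then have "lambda_min (outer v v) \<le> 0"
    using eigval_outer_zero lambda_min_outer_le by blast
  then have "lambda_min (outer v v) * (norm h)\<^sup>2 \<le> 0"
    by (simp add: mult_nonpos_nonneg)
  then show ?thesis by (meson order_trans zero_le_power2)
next
  case False
  define c where "c = (v \<bullet> h) / (norm v)\<^sup>2"
  have "v \<bullet> (h - c *\<^sub>R v) = 0"
    using False ex_nonzero_vec by (auto simp: c_def inner_diff_right power2_norm_eq_inner)
  with False have h: "h = c *\<^sub>R v" by (metis eq_iff_diff_eq_0)
  have "lambda_min (outer v v) * (norm h)\<^sup>2 \<le> (norm v)\<^sup>2 * (norm h)\<^sup>2"
    using lambda_min_outer_le[OF eigval_outer_norm[of v]] by (simp add: mult_right_mono)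
  also have "\<dots> = (v \<bullet> h)\<^sup>2"
    unfolding h by (simp add: power_mult_distrib flip: power2_norm_eq_inner)
  finally show ?thesis .
qed

lemma norm_mult_vec_ge_if_coercive:
  assumes "\<And>h. c * (norm h)\<^sup>2 \<le> h \<bullet> (Q *v h)"
  shows "c * norm h \<le> norm (Q *v h)"
proof (cases "h = 0")
  case False
  have "norm h * (c * norm h) \<le> norm h * norm (Q *v h)"
    using assms[of h] norm_cauchy_schwarz[of h "Q *v h"] by (simp add: power2_eq_square mult_ac)
  then show ?thesis using False by simp
qed simp

lemma invertible_if_coercive:
  fixes Q :: "real^'m^'m"
  assumes "0 < c" "\<And>h. c * (norm h)\<^sup>2 \<le> h \<bullet> (Q *v h)"
  shows "invertible Q"
proof -
  have "h = 0" if "Q *v h = 0" for h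
    using norm_mult_vec_ge_if_coercive[OF assms(2), of h] that assms(1)
    by (simp add: mult_le_0_iff)
  then show ?thesis
    using matrix_left_invertible_ker invertible_left_inverse by blast
qed

lemma matrix_inv_right: "invertible A \<Longrightarrow> A ** matrix_inv A = mat 1"
  unfolding invertible_def matrix_inv_def by (rule someI_ex[THEN conjunct1])

lemma mnorm_matrix_inv_le_if_coercive:
  fixes Q :: "real^'m^'m"
  assumes "0 < c" "\<And>h. c * (norm h)\<^sup>2 \<le> h \<bullet> (Q *v h)"
  shows "mnorm (matrix_inv Q) \<le> 1 / c"
proof (rule mnorm_le)
  fix h
  define g where "g = matrix_inv Q *v h"
  have "Q *v g = h"
    using matrix_inv_right[OF invertible_if_coercive[OF assms]]
    by (simp add: g_def matrix_vector_mul_assoc)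
  then have "c * norm g \<le> norm h"
    using norm_mult_vec_ge_if_coercive[OF assms(2)] by metis
  then show "norm (matrix_inv Q *v h) \<le> 1 / c * norm h"
    using assms(1) by (simp add: g_def field_simps)
qed

lemma mnorm_matrix_inv_mult_lt_1:
  fixes Q E :: "real^'m^'m"
  assumes coercive: "\<And>h. c * (norm h)\<^sup>2 \<le> h \<bullet> (Q *v h)" and "mnorm E < c"
  shows "mnorm (matrix_inv Q ** E) < 1"
proof -
  have "0 < c" using mnorm_nonneg[of E] \<open>mnorm E < c\<close> by linarith
  have "mnorm (matrix_inv Q ** E) \<le> mnorm (matrix_inv Q) * mnorm E"
    by (rule mnorm_mult_le)
  also have "\<dots> \<le> 1 / c * mnorm E"
    using mnorm_matrix_inv_le_if_coercive[OF \<open>0 < c\<close> coercive]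
    by (rule mult_right_mono) (rule mnorm_nonneg)
  also have "\<dots> < 1" using \<open>mnorm E < c\<close> \<open>0 < c\<close> by simp
  finally show ?thesis .
qed

lemma norm_le_Sup_sqrt_lambda_max_outer:
  assumes "bdd_above {sqrt (lambda_max (outer (F j y) (F j y))) | j y. P j y}" "P j y"
  shows "norm (F j y) \<le> Sup {sqrt (lambda_max (outer (F j y) (F j y))) | j y. P j y}"
proof -
  have "norm (F j y) \<le> sqrt (lambda_max (outer (F j y) (F j y)))"
    using norm_square_le_lambda_max_outer real_le_rsqrt by blast
  also have "\<dots> \<le> Sup {sqrt (lambda_max (outer (F j y) (F j y))) | j y. P j y}"
    by (rule cSup_upper[OF _ assms(1)]) (use assms(2) in auto)
  finally show ?thesis .
qed

lemma Inf_sqrt_lambda_min_outer_mult_le: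
  assumes "\<sigma> = Inf {sqrt (lambda_min (outer (F j y) (F j y))) | j y. P j y}" "0 \<le> \<sigma>" "P j y"
  shows "\<sigma>\<^sup>2 * (norm h)\<^sup>2 \<le> (F j y \<bullet> h)\<^sup>2"
proof -
  have "bdd_below {sqrt (lambda_min (outer (F j y) (F j y))) | j y. P j y}"
    by (rule bdd_belowI[of _ 0]) (auto simp: lambda_min_outer_nonneg)
  then have "\<sigma> \<le> sqrt (lambda_min (outer (F j y) (F j y)))"
    unfolding assms(1) by (rule cInf_lower[rotated]) (use assms(3) in auto)
  then have "\<sigma>\<^sup>2 \<le> lambda_min (outer (F j y) (F j y))"
    by (metis assms(2) power_mono real_sqrt_pow2 lambda_min_outer_nonneg)
  then show ?thesis
    using lambda_min_outer_mult_le by (meson mult_right_mono order_trans zero_le_power2)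
qed

lemma inner_Qmat: "h \<bullet> (Qmat Nb F k y *v h) = (\<Sum>l\<in>Nb k. (F l y \<bullet> h)\<^sup>2)"
  by (simp add: Qmat_def sum_matrix_vector_mult outer_mult_vec inner_sum_right
      power2_eq_square inner_commute)

lemma Qmat_coercive:
  assumes "\<And>l. l \<in> Nb k \<Longrightarrow> c * (norm h)\<^sup>2 \<le> (F l y \<bullet> h)\<^sup>2"
  shows "real (card (Nb k)) * c * (norm h)\<^sup>2 \<le> h \<bullet> (Qmat Nb F k y *v h)"
  unfolding inner_Qmat using sum_mono[OF assms] by (simp add: mult.assoc)

lemma mnorm_Qmat_diff_le:
  assumes fin: "finite (Nb k)" "finite (Nb l)"
    and common: "\<And>m. m \<in> Nb k \<inter> Nb l \<Longrightarrow>
      mnorm (outer (F m a) (F m a) - outer (F m b) (F m b)) \<le> \<gamma> * norm (a - b)"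
    and only_k: "\<And>m. m \<in> Nb k - Nb l \<Longrightarrow> norm (F m a) \<le> s"
    and only_l: "\<And>m. m \<in> Nb l - Nb k \<Longrightarrow> norm (F m b) \<le> s"
  shows "mnorm (Qmat Nb F k a - Qmat Nb F l b)
    \<le> real (card (Nb k \<inter> Nb l)) * \<gamma> * norm (a - b)
      + real (card (Nb k - Nb l) + card (Nb l - Nb k)) * s\<^sup>2"
proof -
  define G where "G = (\<lambda>m y. outer (F m y) (F m y))"
  have "Qmat Nb F k a = (\<Sum>m\<in>Nb k \<inter> Nb l. G m a) + (\<Sum>m\<in>Nb k - Nb l. G m a)"
    unfolding Qmat_def G_def by (rule sum.Int_Diff[OF fin(1)])
  moreover have "Qmat Nb F l b = (\<Sum>m\<in>Nb k \<inter> Nb l. G m b) + (\<Sum>m\<in>Nb l - Nb k. G m b)"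
    unfolding Qmat_def G_def Int_commute[of "Nb k"] by (rule sum.Int_Diff[OF fin(2)])
  ultimately have "Qmat Nb F k a - Qmat Nb F l b =
      ((\<Sum>m\<in>Nb k \<inter> Nb l. G m a - G m b) + (\<Sum>m\<in>Nb k - Nb l. G m a)) - (\<Sum>m\<in>Nb l - Nb k. G m b)"
    by (simp add: sum_subtractf algebra_simps)
  then have "mnorm (Qmat Nb F k a - Qmat Nb F l b) \<le> mnorm (\<Sum>m\<in>Nb k \<inter> Nb l. G m a - G m b)
      + mnorm (\<Sum>m\<in>Nb k - Nb l. G m a) + mnorm (\<Sum>m\<in>Nb l - Nb k. G m b)"
    using mnorm_diff_le mnorm_add_le by (smt (verit))
  also have "\<dots> \<le> (\<Sum>m\<in>Nb k \<inter> Nb l. \<gamma> * norm (a - b))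
      + (\<Sum>m\<in>Nb k - Nb l. s\<^sup>2) + (\<Sum>m\<in>Nb l - Nb k. s\<^sup>2)"
  proof (intro add_mono order_trans[OF mnorm_sum_le] sum_mono)
    fix m assume "m \<in> Nb k \<inter> Nb l"
    then show "mnorm (G m a - G m b) \<le> \<gamma> * norm (a - b)" unfolding G_def by (rule common)
  next
    fix m assume "m \<in> Nb k - Nb l"
    then show "mnorm (G m a) \<le> s\<^sup>2"
      unfolding G_def using mnorm_outer_le only_k by (meson norm_ge_zero order_trans power_mono)
  next
    fix m assume "m \<in> Nb l - Nb k"
    then show "mnorm (G m b) \<le> s\<^sup>2"
      unfolding G_def using mnorm_outer_le only_l by (meson norm_ge_zero order_trans power_mono)
  qed
  also have "\<dots> = real (card (Nb k \<inter> Nb l)) * \<gamma> * norm (a - b)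
      + real (card (Nb k - Nb l) + card (Nb l - Nb k)) * s\<^sup>2"
    by (simp add: algebra_simps)
  finally show ?thesis .
qed

theorem corollary1:
  fixes N :: nat and Nb :: "nat \<Rightarrow> nat set" and X :: "(real^'m) set"
    and f :: "nat \<Rightarrow> real^'m \<Rightarrow> real" and F :: "nat \<Rightarrow> real^'m \<Rightarrow> real^'m"
    and x :: "nat \<Rightarrow> nat \<Rightarrow> real^'m" and x0 xstar :: "real^'m" and \<alpha> :: real
    and Sigma_min Sigma_max sigma_min sigma_max e_max \<omega> \<gamma>_f \<gamma>_F :: real
    and k l :: nat
  assumes
    \<comment> \<open>network\<close>
    nbhd_sub: "\<And>j. j \<in> {1..N} \<Longrightarrow> Nb j \<subseteq> {1..N}"
    and nbhd_self: "\<And>j. j \<in> {1..N} \<Longrightarrow> j \<in> Nb j"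
    and kl: "k \<in> {1..N}" "l \<in> {1..N}"
    \<comment> \<open>parameter set\<close>
    and X_closed: "closed X" and X_convex: "convex X"
    \<comment> \<open>continuously differentiable f_k with row gradient F_k\<close>
    and f_deriv: "\<And>j y. j \<in> {1..N} \<Longrightarrow> (f j has_derivative (\<lambda>h. F j y \<bullet> h)) (at y)"
    and F_cont: "\<And>j. j \<in> {1..N} \<Longrightarrow> continuous_on UNIV (F j)"
    \<comment> \<open>non-cooperative Gauss-Newton iteration\<close>
    and alpha: "0 < \<alpha>" "\<alpha> \<le> 1"
    and x_init: "\<And>j. j \<in> {1..N} \<Longrightarrow> x j 0 = x0"
    and x_step: "\<And>j i. j \<in> {1..N} \<Longrightarrow>
        x j (Suc i) = x j i - \<alpha> *\<^sub>R (matrix_inv (Qmat Nb F j (x j i)) *v qvec Nb f F j (x j i))"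
    and x_in_X: "\<And>j i. j \<in> {1..N} \<Longrightarrow> x j i \<in> X"
    \<comment> \<open>x* is a local minimizer of ||f(x)||^2\<close>
    and xstar_locmin: "\<exists>e>0. \<forall>y. dist y xstar < e \<longrightarrow>
        (\<Sum>j\<in>{1..N}. (f j xstar)\<^sup>2) \<le> (\<Sum>j\<in>{1..N}. (f j y)\<^sup>2)"
    \<comment> \<open>Assumption A1\<close>
    and A1_stat: "\<exists>xs. 2 *\<^sub>R (\<Sum>j\<in>{1..N}. f j xs *\<^sub>R F j xs) = 0"
    and A1_Smin: "Sigma_min = Inf {sqrt (lambda_min (\<Sum>j\<in>{1..N}. outer (F j y) (F j y))) | y. y \<in> X}"
    and A1_Smax: "Sigma_max = Sup {sqrt (lambda_max (\<Sum>j\<in>{1..N}. outer (F j y) (F j y))) | y. y \<in> X}"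
    and A1_Sbdd: "bdd_above {sqrt (lambda_max (\<Sum>j\<in>{1..N}. outer (F j y) (F j y))) | y. y \<in> X}"
    and A1_Sord: "0 < Sigma_min" "Sigma_min < Sigma_max"
    \<comment> \<open>Assumption A2 (1)\<close>
    and A2_emax: "\<And>j i. j \<in> {1..N} \<Longrightarrow> sqrt (\<Sum>m\<in>Nb j. (f m (x j i))\<^sup>2) \<le> e_max"
    \<comment> \<open>Assumption A2 (2)\<close>
    and A2_smin: "sigma_min = Inf {sqrt (lambda_min (outer (F j y) (F j y))) | j y. j \<in> {1..N} \<and> y \<in> X}"
    and A2_smax: "sigma_max = Sup {sqrt (lambda_max (outer (F j y) (F j y))) | j y. j \<in> {1..N} \<and> y \<in> X}"
    and A2_sbdd: "bdd_above {sqrt (lambda_max (outer (F j y) (F j y))) | j y. j \<in> {1..N} \<and> y \<in> X}"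
    and A2_sord: "0 < sigma_min" "sigma_min < sigma_max"
    \<comment> \<open>Assumption A2 (3)\<close>
    and A2_Lip_stack: "\<And>j y z. j \<in> {1..N} \<Longrightarrow> y \<in> X \<Longrightarrow> z \<in> X \<Longrightarrow>
        stack_norm (Nb j) (\<lambda>m. F m y - F m z) \<le> \<omega> * norm (y - z)"
    and A2_Lip_F: "\<And>j y z. j \<in> {1..N} \<Longrightarrow> y \<in> X \<Longrightarrow> z \<in> X \<Longrightarrow>
        norm (F j y - F j z) \<le> \<omega> * norm (y - z)"
    and A2_gf: "\<And>j y z. j \<in> {1..N} \<Longrightarrow> y \<in> X \<Longrightarrow> z \<in> X \<Longrightarrow>
        norm (f j y *\<^sub>R F j y - f j z *\<^sub>R F j z) \<le> \<gamma>_f * norm (y - z)"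
    and A2_gF: "\<And>j y z. j \<in> {1..N} \<Longrightarrow> y \<in> X \<Longrightarrow> z \<in> X \<Longrightarrow>
        mnorm (outer (F j y) (F j y) - outer (F j z) (F j z)) \<le> \<gamma>_F * norm (y - z)"
    and A2_gf_ge: "\<gamma>_f \<ge> \<omega> * (e_max + Sigma_max)"
    and A2_gF_ge: "\<gamma>_F \<ge> 2 * Sigma_max * \<omega>"
  shows
    "(\<forall>i. mnorm (Qmat Nb F k (x k i) - Qmat Nb F l (x l i))
          \<le> real (card (Nb k \<inter> Nb l)) * \<gamma>_F * norm (x k i - x l i)
            + real (card (Nb k - Nb l) + card (Nb l - Nb k)) * sigma_max\<^sup>2)
     \<and> (real (card (Nb k - Nb l) + card (Nb l - Nb k)) / real (card (Nb l))
            < sigma_min\<^sup>2 / sigma_max\<^sup>2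
        \<and> sigma_min\<^sup>2 / sigma_max\<^sup>2 < 1
        \<longrightarrow> mnorm (matrix_inv (Qmat Nb F l (x l 0))
                  ** (Qmat Nb F k (x k 0) - Qmat Nb F l (x l 0))) < 1)"
proof -
  have mem: "m \<in> {1..N}" if "m \<in> Nb j" "j \<in> {1..N}" for m j
    using nbhd_sub that by blast
  have fin: "finite (Nb j)" if "j \<in> {1..N}" for j
    using nbhd_sub[OF that] finite_subset by blast
  have F_le: "norm (F m y) \<le> sigma_max" if "m \<in> {1..N}" "y \<in> X" for m y
    unfolding A2_smax using A2_sbdd that by (intro norm_le_Sup_sqrt_lambda_max_outer) auto
  have F_coercive: "sigma_min\<^sup>2 * (norm h)\<^sup>2 \<le> (F m y \<bullet> h)\<^sup>2"
    if "m \<in> {1..N}" "y \<in> X" for m y h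
    by (rule Inf_sqrt_lambda_min_outer_mult_le[OF A2_smin]) (use A2_sord that in auto)
  have E_le: "mnorm (Qmat Nb F k (x k i) - Qmat Nb F l (x l i))
      \<le> real (card (Nb k \<inter> Nb l)) * \<gamma>_F * norm (x k i - x l i)
        + real (card (Nb k - Nb l) + card (Nb l - Nb k)) * sigma_max\<^sup>2" for i
    by (intro mnorm_Qmat_diff_le fin A2_gF F_le x_in_X) (use kl mem in blast)+
  moreover have "mnorm (matrix_inv (Qmat Nb F l (x l 0))
      ** (Qmat Nb F k (x k 0) - Qmat Nb F l (x l 0))) < 1"
    if ratio: "real (card (Nb k - Nb l) + card (Nb l - Nb k)) / real (card (Nb l))
      < sigma_min\<^sup>2 / sigma_max\<^sup>2"
  proof (rule mnorm_matrix_inv_mult_lt_1)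
    have "x l 0 \<in> X" using x_in_X kl by blast
    then show "real (card (Nb l)) * sigma_min\<^sup>2 * (norm h)\<^sup>2
        \<le> h \<bullet> (Qmat Nb F l (x l 0) *v h)" for h
      by (intro Qmat_coercive F_coercive) (use kl mem in blast)
    have "0 < real (card (Nb l))"
      using nbhd_self[OF kl(2)] fin[OF kl(2)] by (auto simp: card_gt_0_iff)
    with ratio A2_sord have "real (card (Nb k - Nb l) + card (Nb l - Nb k)) * sigma_max\<^sup>2
        < real (card (Nb l)) * sigma_min\<^sup>2"
      by (simp add: field_simps)
    moreover have "x k 0 = x l 0" using x_init kl by simp
    ultimately show "mnorm (Qmat Nb F k (x k 0) - Qmat Nb F l (x l 0))
        < real (card (Nb l)) * sigma_min\<^sup>2"
      using E_le[of 0] by simp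
  qed
  ultimately show ?thesis by blast
qed

end
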